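(* Let $P$ be a join-semilattice with a least element $0$, and let $L:=\mathrm{Id}(P)$ be the lattice of ideals of $P$ ordered by inclusion. Suppose that $\dim_\vee(P)=n<\omega$. Then $L$ is order-scattered if and only if $P$ is order-scattered and $P$ has no join-subsemilattice isomorphic to $\Omega(\eta)$.
   Context: An ideal of a poset $P$ is a non-empty initial segment of $P$ that is up-directed. A poset is order-scattered if it contains no subset order-isomorphic to the chain $\mathbb{Q}$ of rationals. The join-dimension $\dim_\vee(P)$ of a join-semilattice $P$ is the least cardinal $\kappa$ such that $P$ admits a one-to-one join-preserving map into a direct product of $\kappa$ chains (with the componentwise order). $\Omega(\eta)$ denotes the join-subsemilattice of the direct product $\mathbb{N}\times D$ (componentwise order), where $\mathbb{N}$ is the chain of non-negative integers and $D$ is the chain of dyadic rationals in $[0,1)$, consisting of the pairs $(n,r)$ with $2^n r\in\mathbb{Z}$; its second projection is all of $D$ and each set $(\{n\}\times D)\cap\Omega(\eta)$ is finite. *)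

theory Defs
  imports Main "HOL-Library.Extended_Nat"
begin

definition ideal_of :: "'a::order set \<Rightarrow> bool" where
  "ideal_of I \<longleftrightarrow> I \<noteq> {} \<and> (\<forall>x\<in>I. \<forall>y. y \<le> x \<longrightarrow> y \<in> I)
     \<and> (\<forall>x\<in>I. \<forall>y\<in>I. \<exists>z\<in>I. x \<le> z \<and> y \<le> z)"

definition Ideals :: "'a::order set set" where
  "Ideals = {I. ideal_of I}"

definition order_scattered_on :: "'b set \<Rightarrow> ('b \<Rightarrow> 'b \<Rightarrow> bool) \<Rightarrow> bool" where
  "order_scattered_on A le \<longleftrightarrow>
     \<not> (\<exists>f :: rat \<Rightarrow> 'b. range f \<subseteq> A \<and> inj f \<and> (\<forall>x y. le (f x) (f y) \<longleftrightarrow> x \<le> y))"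

text \<open>The chains are taken with elements in the type of P
  itself (no loss of generality: only the image of each coordinate map matters,
  and it has cardinality at most that of P).\<close>
definition join_embeds_chains :: "'a::semilattice_sup itself \<Rightarrow> nat \<Rightarrow> bool" where
  "join_embeds_chains _ n \<longleftrightarrow>
     (\<exists>(C :: nat \<Rightarrow> 'a set) (le :: nat \<Rightarrow> 'a \<Rightarrow> 'a \<Rightarrow> bool) (f :: nat \<Rightarrow> 'a \<Rightarrow> 'a).
        (\<forall>i<n. (\<forall>x\<in>C i. le i x x)
             \<and> (\<forall>x\<in>C i. \<forall>y\<in>C i. le i x y \<and> le i y x \<longrightarrow> x = y)
             \<and> (\<forall>x\<in>C i. \<forall>y\<in>C i. \<forall>z\<in>C i. le i x y \<and> le i y z \<longrightarrow> le i x z)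
             \<and> (\<forall>x\<in>C i. \<forall>y\<in>C i. le i x y \<or> le i y x))
      \<and> (\<forall>i<n. \<forall>x. f i x \<in> C i)
      \<and> (\<forall>i<n. \<forall>x y. f i (sup x y) = (if le i (f i x) (f i y) then f i y else f i x))
      \<and> (\<forall>x y. (\<forall>i<n. f i x = f i y) \<longrightarrow> x = y))"

definition join_dim :: "'a::semilattice_sup itself \<Rightarrow> enat" where
  "join_dim T = (if \<exists>n. join_embeds_chains T n
                 then enat (LEAST n. join_embeds_chains T n) else \<infinity>)"

text \<open>Omega(eta) inside N x D, with componentwise order and join.\<close>
definition Omega_eta :: "(nat \<times> rat) set" where
  "Omega_eta = {(n, r). 0 \<le> r \<and> r < 1 \<and> r * 2 ^ n \<in> \<int>}"

definition pair_join :: "nat \<times> rat \<Rightarrow> nat \<times> rat \<Rightarrow> nat \<times> rat" where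
  "pair_join a b = (max (fst a) (fst b), max (snd a) (snd b))"

text \<open>P has a join-subsemilattice isomorphic to Omega(eta): a one-to-one
  join-preserving map from Omega(eta) into P (its image is then a
  join-subsemilattice and the map is an order-isomorphism onto it).\<close>
definition has_Omega_eta :: "'a::semilattice_sup itself \<Rightarrow> bool" where
  "has_Omega_eta _ \<longleftrightarrow> (\<exists>g :: nat \<times> rat \<Rightarrow> 'a. inj_on g Omega_eta
     \<and> (\<forall>a\<in>Omega_eta. \<forall>b\<in>Omega_eta. g (pair_join a b) = sup (g a) (g b)))"

end

theory Submission
  imports Defs "HOL-Library.Countable"
begin

text \<open>
  Principal ideals embed \<open>P\<close> into \<open>Id(P)\<close>, and a copy \<open>g\<close> of \<open>\<Omega>(\<eta>)\<close> yields the ideals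
  generated by \<open>g(m, r)\<close> with \<open>r < t\<close>, which increase strictly with \<open>t \<in> (0,1]\<close> because the
  dyadic rationals are dense; so a scattered \<open>Id(P)\<close> forces the right-hand side.

  Conversely, fix a one-to-one join-preserving map into \<open>n\<close> chains and a copy \<open>J\<close> of \<open>\<rat>\<close> in
  \<open>Id(P)\<close>. For ideals \<open>I \<subset> I'\<close>, directedness and the finiteness of \<open>n\<close> give a coordinate in
  which some element of \<open>I'\<close> lies above all of \<open>I\<close>. Squeezing \<open>\<rat>\<close> into subintervals one
  coordinate at a time makes the set \<open>K\<close> of such coordinates the same for all pairs
  \<open>q < q'\<close>. Witnesses \<open>c(q)\<close>, chosen in interleaved gaps, then increase strictly in the
  coordinates of \<open>K\<close> and are bounded by elements of \<open>J 0\<close> in the others. If one \<open>z \<in> J 0\<close>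
  dominates \<open>J 0\<close> outside \<open>K\<close>, the elements \<open>z \<squnion> c(q)\<close> form a copy of \<open>\<rat>\<close> in \<open>P\<close>.
  Otherwise there is an increasing sequence \<open>a\<^sub>m\<close> in \<open>J 0\<close> that grows strictly outside
  \<open>K\<close> and dominates there the witnesses of the dyadics of level \<open>m\<close>, and
  \<open>(m, r) \<mapsto> a\<^sub>m \<squnion> c(r)\<close> embeds \<open>\<Omega>(\<eta>)\<close> into \<open>P\<close>.
\<close>

section \<open>Copies of the rationals\<close>

lemma strict_mono_imp_not_order_scattered:
  fixes F :: "rat \<Rightarrow> 'b::order"
  assumes "strict_mono F" "range F \<subseteq> A"
  shows "\<not> order_scattered_on A (\<le>)"
  unfolding order_scattered_on_def
  using assms strict_mono_imp_inj_on strict_mono_less_eq by blast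

lemma not_order_scattered_imp_strict_mono:
  fixes A :: "'b::order set"
  assumes "\<not> order_scattered_on A (\<le>)"
  obtains F :: "rat \<Rightarrow> 'b" where "strict_mono F" "range F \<subseteq> A"
proof -
  from assms obtain F :: "rat \<Rightarrow> 'b" where F: "range F \<subseteq> A" "inj F" "\<And>x y. F x \<le> F y \<longleftrightarrow> x \<le> y"
    unfolding order_scattered_on_def by blast
  have "strict_mono F"
    by (rule strict_monoI) (metis F(2,3) injD order_less_le)
  then show thesis using F(1) by (rule that)
qed

definition squash :: "rat \<Rightarrow> rat \<Rightarrow> rat \<Rightarrow> rat" where
  "squash a b x = a + (b - a) * (1 + x / (1 + \<bar>x\<bar>)) / 2"

lemma sigmoid_bounds: "-1 < (x::rat) / (1 + \<bar>x\<bar>)" "(x::rat) / (1 + \<bar>x\<bar>) < 1"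
  by (auto simp: divide_simps add_pos_nonneg abs_if)

lemma sigmoid_strict_mono: "strict_mono (\<lambda>x::rat. x / (1 + \<bar>x\<bar>))"
proof (rule strict_monoI)
  fix x y :: rat assume "x < y"
  consider "0 \<le> x" | "y \<le> 0" | "x < 0" "0 < y" by linarith
  then have "x * (1 + \<bar>y\<bar>) < y * (1 + \<bar>x\<bar>)"
  proof cases
    case 3
    then have "x * (1 + \<bar>y\<bar>) < 0" "0 < y * (1 + \<bar>x\<bar>)"
      by (simp_all add: mult_neg_pos add_pos_nonneg)
    then show ?thesis by linarith
  qed (use \<open>x < y\<close> in \<open>simp_all add: algebra_simps\<close>)
  then show "x / (1 + \<bar>x\<bar>) < y / (1 + \<bar>y\<bar>)"
    by (simp add: divide_simps add_pos_nonneg)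
qed

lemma squash_strict_mono: "a < b \<Longrightarrow> strict_mono (squash a b)"
  using sigmoid_strict_mono
  by (auto simp: strict_mono_def squash_def divide_strict_right_mono)

lemma squash_bounds:
  assumes "a < b" shows "a < squash a b x" "squash a b x < b"
proof -
  have "0 < (b - a) * (1 + x / (1 + \<bar>x\<bar>))" "(b - a) * (1 + x / (1 + \<bar>x\<bar>)) < (b - a) * 2"
    using assms sigmoid_bounds[of x] by (simp, intro mult_strict_left_mono) auto
  then show "a < squash a b x" "squash a b x < b"
    unfolding squash_def by (auto simp: divide_simps)
qed

definition thirds :: "rat \<Rightarrow> rat \<Rightarrow> rat \<times> rat" where
  "thirds l r = ((2 * l + r) / 3, (l + 2 * r) / 3)"

lemma thirds_between:
  "l < r \<Longrightarrow> l < fst (thirds l r) \<and> fst (thirds l r) < snd (thirds l r) \<and> snd (thirds l r) < r"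
  by (simp add: thirds_def field_simps)

text \<open>An order embedding of \<open>\<rat> \<times> 2\<close> (lexicographic) into \<open>(0,1)\<close>: the \<open>k\<close>-th rational
  in the enumeration \<open>from_nat\<close> receives a closed interval placed, by trisection, in the gap
  left between the intervals of the earlier rationals.\<close>

definition next_slot :: "(nat \<Rightarrow> rat \<times> rat) \<Rightarrow> nat \<Rightarrow> rat \<times> rat" where
  "next_slot s k = thirds
     (Max (insert 0 {snd (s j) |j. j < k \<and> from_nat j < (from_nat k :: rat)}))
     (Min (insert 1 {fst (s j) |j. j < k \<and> from_nat k < (from_nat j :: rat)}))"

primrec slots :: "nat \<Rightarrow> nat \<Rightarrow> rat \<times> rat" where
  "slots 0 = (\<lambda>_. (0, 1))"
| "slots (Suc k) = (slots k)(k := next_slot (slots k) k)"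

lemma slots_stable: "j < k \<Longrightarrow> slots k j = slots (Suc j) j"
  by (induction k) (auto simp: less_Suc_eq)

lemma slots_ordered:
  "(\<forall>j<k. 0 < fst (slots k j) \<and> fst (slots k j) < snd (slots k j) \<and> snd (slots k j) < 1) \<and>
   (\<forall>i<k. \<forall>j<k. from_nat i < (from_nat j :: rat) \<longrightarrow> snd (slots k i) < fst (slots k j))"
proof (induction k)
  case (Suc k)
  let ?l = "Max (insert 0 {snd (slots k j) |j. j < k \<and> from_nat j < (from_nat k :: rat)})"
  let ?r = "Min (insert 1 {fst (slots k j) |j. j < k \<and> from_nat k < (from_nat j :: rat)})"
  have "?l < ?r"
    using Suc.IH by (auto simp: Max_less_iff Min_gr_iff intro: order.strict_trans)
  then have new: "?l < fst (next_slot (slots k) k)" "fst (next_slot (slots k) k) < snd (next_slot (slots k) k)"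
    "snd (next_slot (slots k) k) < ?r"
    using thirds_between unfolding next_slot_def by blast+
  have "0 \<le> ?l" "?r \<le> 1" by simp_all
  moreover have "snd (slots k j) \<le> ?l" if "j < k" "from_nat j < (from_nat k :: rat)" for j
    using that by (intro Max_ge) auto
  moreover have "?r \<le> fst (slots k j)" if "j < k" "from_nat k < (from_nat j :: rat)" for j
    using that by (intro Min_le) auto
  ultimately show ?case
    using Suc.IH new by (auto simp: less_Suc_eq intro: order.strict_trans1 order.strict_trans2)
qed simp

definition gap_lo :: "rat \<Rightarrow> rat" where
  "gap_lo q = fst (slots (Suc (to_nat q)) (to_nat q))"

definition gap_hi :: "rat \<Rightarrow> rat" where
  "gap_hi q = snd (slots (Suc (to_nat q)) (to_nat q))"

lemma gap_lo_pos: "0 < gap_lo q"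
  and gap_lo_less_gap_hi: "gap_lo q < gap_hi q"
  using slots_ordered[of "Suc (to_nat q)"] by (auto simp: gap_lo_def gap_hi_def)

lemma gap_hi_less_gap_lo:
  assumes "q < q'" shows "gap_hi q < gap_lo q'"
proof -
  define k where "k = Suc (max (to_nat q) (to_nat q'))"
  have "snd (slots k (to_nat q)) < fst (slots k (to_nat q'))"
    using slots_ordered[of k] assms by (auto simp: k_def)
  then show ?thesis
    using slots_stable[of "to_nat q" k] slots_stable[of "to_nat q'" k]
    by (simp add: gap_lo_def gap_hi_def k_def del: slots.simps)
qed

lemma rat_homogeneous_subchain:
  fixes R :: "nat \<Rightarrow> rat \<Rightarrow> rat \<Rightarrow> bool"
  assumes widen: "\<And>i a b a' b'. R i a' b' \<Longrightarrow> a \<le> a' \<Longrightarrow> b' \<le> b \<Longrightarrow> R i a b"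
  shows "\<exists>e K. strict_mono (e :: rat \<Rightarrow> rat) \<and> K \<subseteq> {..<m} \<and>
           (\<forall>i<m. \<forall>q q'. q < q' \<longrightarrow> (R i (e q) (e q') \<longleftrightarrow> i \<in> K))"
proof (induction m)
  case 0
  show ?case using strict_mono_id by blast
next
  case (Suc m)
  then obtain e :: "rat \<Rightarrow> rat" and K where e: "strict_mono e" and K: "K \<subseteq> {..<m}"
    and hom: "\<And>i q q'. i < m \<Longrightarrow> q < q' \<Longrightarrow> R i (e q) (e q') \<longleftrightarrow> i \<in> K" by auto
  show ?case
  proof (cases "\<forall>q q'. q < q' \<longrightarrow> R m (e q) (e q')")
    case True
    then show ?thesis
      using e K hom by (intro exI[of _ e] exI[of _ "insert m K"]) (auto simp: less_Suc_eq)
  next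
    case False
    then obtain a b where ab: "a < b" and not_R: "\<not> R m (e a) (e b)" by blast
    \<comment> \<open>inside \<open>(a, b)\<close> no pair has colour \<open>m\<close>, since it would widen to the pair \<open>(a, b)\<close>\<close>
    define e' where "e' = e \<circ> squash a b"
    have e': "strict_mono e'"
      unfolding e'_def using e squash_strict_mono[OF ab] by (rule strict_mono_o)
    have "\<not> R m (e' q) (e' q')" for q q'
    proof
      assume "R m (e' q) (e' q')"
      moreover have "e a \<le> e' q" "e' q' \<le> e b"
        using squash_bounds[OF ab] e unfolding e'_def by (simp_all add: strict_mono_less_eq less_imp_le)
      ultimately show False using widen not_R by blast
    qed
    moreover have "R i (e' q) (e' q') \<longleftrightarrow> i \<in> K" if "i < m" "q < q'" for i q q'
      using hom[OF that(1)] squash_strict_mono[OF ab] that(2)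
      unfolding e'_def by (simp add: strict_mono_def)
    ultimately show ?thesis
      using e' K by (intro exI[of _ e'] exI[of _ K]) (auto simp: less_Suc_eq)
  qed
qed

section \<open>Ideals\<close>

lemma ideal_of_downward: "ideal_of I \<Longrightarrow> x \<in> I \<Longrightarrow> y \<le> x \<Longrightarrow> y \<in> I"
  unfolding ideal_of_def by auto

lemma ideal_of_sup:
  fixes I :: "'a::semilattice_sup set"
  assumes "ideal_of I" "x \<in> I" "y \<in> I"
  shows "sup x y \<in> I"
proof -
  obtain z where "z \<in> I" "x \<le> z" "y \<le> z"
    using assms unfolding ideal_of_def by meson
  then show ?thesis using assms(1) ideal_of_downward by (metis le_sup_iff order_refl)
qed

lemma ideal_of_common_witness:
  fixes I :: "'a::semilattice_sup set"
  assumes I: "ideal_of I" and "finite S"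
    and up: "\<And>s y y'. s \<in> S \<Longrightarrow> R s y \<Longrightarrow> y \<le> y' \<Longrightarrow> R s y'"
    and witness: "\<And>s. s \<in> S \<Longrightarrow> \<exists>y\<in>I. R s y"
  shows "\<exists>y\<in>I. \<forall>s\<in>S. R s y"
  using \<open>finite S\<close> up witness
proof (induction S rule: finite_induct)
  case empty
  then show ?case using I unfolding ideal_of_def by auto
next
  case (insert s S)
  obtain y y' where "y \<in> I" "\<forall>t\<in>S. R t y" "y' \<in> I" "R s y'"
    using insert.IH insert.prems by (metis insertCI)
  then have "sup y y' \<in> I" "\<forall>t\<in>insert s S. R t (sup y y')"
    using ideal_of_sup[OF I] insert.prems(1) by (auto intro: sup_ge1 sup_ge2)
  then show ?case by blast
qed

lemma ideal_of_principal: "ideal_of {y. y \<le> x}"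
  unfolding ideal_of_def by (auto dest: order.trans)

lemma Ideals_scattered_imp_scattered:
  assumes "order_scattered_on (Ideals :: 'a::order set set) (\<subseteq>)"
  shows "order_scattered_on (UNIV :: 'a set) (\<le>)"
proof (rule ccontr)
  assume "\<not> order_scattered_on (UNIV :: 'a set) (\<le>)"
  then obtain F :: "rat \<Rightarrow> 'a" where "strict_mono F"
    by (rule not_order_scattered_imp_strict_mono)
  then have "strict_mono (\<lambda>q. {y. y \<le> F q})"
    by (auto simp: strict_mono_def less_le_not_le intro: order.trans)
  moreover have "range (\<lambda>q. {y. y \<le> F q}) \<subseteq> Ideals"
    using ideal_of_principal by (auto simp: Ideals_def)
  ultimately show False
    using strict_mono_imp_not_order_scattered assms by blast
qed

section \<open>The semilattice \<open>\<Omega>(\<eta>)\<close>\<close>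

lemma Omega_eta_pair_join:
  assumes "a \<in> Omega_eta" "b \<in> Omega_eta"
  shows "pair_join a b \<in> Omega_eta"
proof -
  obtain m r m' s where ab: "a = (m, r)" "b = (m', s)" by fastforce
  have scale: "t * 2 ^ max m m' \<in> \<int>" if "t * 2 ^ k \<in> \<int>" "k \<le> max m m'" for t :: rat and k
  proof -
    have "t * 2 ^ max m m' = (t * 2 ^ k) * of_int (2 ^ (max m m' - k))"
      using that(2) by (simp add: mult.assoc flip: power_add)
    then show ?thesis using that(1) by (metis Ints_mult Ints_of_int)
  qed
  have "max r s * 2 ^ max m m' \<in> \<int>"
    using assms scale[of r m] scale[of s m'] by (auto simp: Omega_eta_def ab max_def)
  then show ?thesis using assms by (auto simp: Omega_eta_def pair_join_def ab)
qed

lemma finite_Omega_eta_level: "finite {r. (m, r) \<in> Omega_eta}"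
proof (rule finite_subset)
  show "{r. (m, r) \<in> Omega_eta} \<subseteq> (\<lambda>k. of_int k / 2 ^ m) ` {0..2 ^ m}"
  proof
    fix r assume "r \<in> {r. (m, r) \<in> Omega_eta}"
    then have r: "0 \<le> r" "r < 1" "r * 2 ^ m \<in> \<int>" by (simp_all add: Omega_eta_def)
    then obtain k where k: "r * 2 ^ m = of_int k" by (blast elim: Ints_cases)
    have "0 \<le> r * 2 ^ m" "r * 2 ^ m \<le> 2 ^ m" using r by simp_all
    then have "0 \<le> k" "k \<le> 2 ^ m" unfolding k by (simp_all flip: of_int_le_iff)
    then show "r \<in> (\<lambda>k. of_int k / 2 ^ m) ` {0..2 ^ m}"
      using k by (auto simp: field_simps)
  qed
qed simp

lemma Omega_eta_between:
  assumes "0 \<le> t" "t < t'" "t' \<le> 1"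
  obtains m d where "(m, d) \<in> Omega_eta" "t \<le> d" "d < t'"
proof -
  obtain m :: nat where "1 < of_nat m * (t' - t)"
    using ex_less_of_nat_mult[of "t' - t" 1] assms by auto
  moreover have "of_nat m * (t' - t) < 2 ^ m * (t' - t)"
    using assms of_nat_less_two_power[of m] by (intro mult_strict_right_mono) auto
  ultimately have gap: "t * 2 ^ m + 1 < t' * 2 ^ m" by (simp add: algebra_simps)
  define k where "k = \<lceil>t * 2 ^ m\<rceil>"
  have "t * 2 ^ m \<le> of_int k" "of_int k < t' * 2 ^ m"
    using ceiling_correct[of "t * 2 ^ m"] gap unfolding k_def by linarith+
  then have d: "t \<le> of_int k / 2 ^ m" "of_int k / 2 ^ m < t'"
    by (simp_all add: pos_le_divide_eq pos_divide_less_eq)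
  have "0 \<le> of_int k / (2 ^ m :: rat)" "of_int k / (2 ^ m :: rat) < 1"
    using assms d by linarith+
  moreover have "of_int k / 2 ^ m * 2 ^ m \<in> (\<int> :: rat set)" by simp
  ultimately
  have "(m, of_int k / 2 ^ m) \<in> Omega_eta"
    unfolding Omega_eta_def by blast
  then show thesis using d by (rule that)
qed

definition Omega_cut :: "(nat \<times> rat \<Rightarrow> 'a::order) \<Rightarrow> rat \<Rightarrow> 'a set" where
  "Omega_cut g t = {y. \<exists>p\<in>Omega_eta. snd p < t \<and> y \<le> g p}"

context
  fixes g :: "nat \<times> rat \<Rightarrow> 'a::semilattice_sup"
  assumes join: "\<And>a b. a \<in> Omega_eta \<Longrightarrow> b \<in> Omega_eta \<Longrightarrow> g (pair_join a b) = sup (g a) (g b)"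
begin

lemma ideal_of_Omega_cut:
  assumes "0 < t" shows "ideal_of (Omega_cut g t)"
  unfolding ideal_of_def
proof (intro conjI ballI allI impI)
  have "(0, 0) \<in> Omega_eta" by (simp add: Omega_eta_def)
  then show "Omega_cut g t \<noteq> {}" using assms by (force simp: Omega_cut_def)
next
  fix x y assume "x \<in> Omega_cut g t" "y \<le> x"
  then show "y \<in> Omega_cut g t" by (auto simp: Omega_cut_def dest: order.trans)
next
  fix x y assume "x \<in> Omega_cut g t" "y \<in> Omega_cut g t"
  then obtain p p' where p: "p \<in> Omega_eta" "snd p < t" "x \<le> g p"
    and p': "p' \<in> Omega_eta" "snd p' < t" "y \<le> g p'" by (auto simp: Omega_cut_def)
  have "pair_join p p' \<in> Omega_eta" "snd (pair_join p p') < t"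
    using p p' by (simp_all add: Omega_eta_pair_join, simp add: pair_join_def)
  then have "g (pair_join p p') \<in> Omega_cut g t"
    unfolding Omega_cut_def by blast
  moreover have "x \<le> g (pair_join p p')" "y \<le> g (pair_join p p')"
    using p p' join[OF p(1) p'(1)] by (simp_all add: le_supI1 le_supI2)
  ultimately show "\<exists>z\<in>Omega_cut g t. x \<le> z \<and> y \<le> z" by blast
qed

lemma Omega_cut_strict_mono:
  assumes inj: "inj_on g Omega_eta" and "0 \<le> t" "t < t'" "t' \<le> 1"
  shows "Omega_cut g t \<subset> Omega_cut g t'"
proof
  show "Omega_cut g t \<subseteq> Omega_cut g t'"
    using \<open>t < t'\<close> unfolding Omega_cut_def by (blast intro: order.strict_trans)
  obtain m d where md: "(m, d) \<in> Omega_eta" "t \<le> d" "d < t'"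
    using Omega_eta_between assms(2-4) .
  have "g (m, d) \<notin> Omega_cut g t"
  proof
    assume "g (m, d) \<in> Omega_cut g t"
    then obtain p where p: "p \<in> Omega_eta" "snd p < t" "g (m, d) \<le> g p"
      by (auto simp: Omega_cut_def)
    then have "g (pair_join (m, d) p) = g p"
      using join md(1) by (simp add: sup_absorb2)
    then have "pair_join (m, d) p = p"
      using inj Omega_eta_pair_join md(1) p(1) by (meson inj_onD)
    then have "d \<le> snd p" by (metis max.cobounded1 pair_join_def snd_conv)
    then show False using md p by simp
  qed
  moreover have "g (m, d) \<in> Omega_cut g t'"
    using md unfolding Omega_cut_def by force
  ultimately show "Omega_cut g t \<noteq> Omega_cut g t'" by blast
qed

end

lemma has_Omega_eta_imp_Ideals_not_scattered:
  assumes "has_Omega_eta TYPE('a::semilattice_sup)"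
  shows "\<not> order_scattered_on (Ideals :: 'a set set) (\<subseteq>)"
proof -
  obtain g :: "nat \<times> rat \<Rightarrow> 'a" where inj: "inj_on g Omega_eta"
    and join: "\<And>a b. a \<in> Omega_eta \<Longrightarrow> b \<in> Omega_eta \<Longrightarrow> g (pair_join a b) = sup (g a) (g b)"
    using assms unfolding has_Omega_eta_def by blast
  have "strict_mono (Omega_cut g \<circ> squash 0 1)"
  proof (rule strict_monoI)
    fix x y :: rat assume "x < y"
    then have "squash 0 1 x < squash 0 1 y"
      using squash_strict_mono[of 0 1] by (simp add: strict_mono_def)
    then show "(Omega_cut g \<circ> squash 0 1) x < (Omega_cut g \<circ> squash 0 1) y"
      using Omega_cut_strict_mono[OF join inj] squash_bounds[of 0 1] by (simp add: less_imp_le)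
  qed
  moreover have "range (Omega_cut g \<circ> squash 0 1) \<subseteq> Ideals"
    using squash_bounds[of 0 1] ideal_of_Omega_cut[OF join] by (auto simp: Ideals_def)
  ultimately show ?thesis by (rule strict_mono_imp_not_order_scattered)
qed

section \<open>Join-embeddings into finitely many chains\<close>

locale join_chain_embedding =
  fixes n :: nat and C :: "nat \<Rightarrow> 'a::semilattice_sup set"
    and le :: "nat \<Rightarrow> 'a \<Rightarrow> 'a \<Rightarrow> bool" and f :: "nat \<Rightarrow> 'a \<Rightarrow> 'a"
  assumes chain_refl: "i < n \<Longrightarrow> x \<in> C i \<Longrightarrow> le i x x"
    and chain_antisym: "i < n \<Longrightarrow> x \<in> C i \<Longrightarrow> y \<in> C i \<Longrightarrow> le i x y \<Longrightarrow> le i y x \<Longrightarrow> x = y"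
    and chain_trans: "i < n \<Longrightarrow> x \<in> C i \<Longrightarrow> y \<in> C i \<Longrightarrow> z \<in> C i \<Longrightarrow> le i x y \<Longrightarrow> le i y z \<Longrightarrow> le i x z"
    and chain_total: "i < n \<Longrightarrow> x \<in> C i \<Longrightarrow> y \<in> C i \<Longrightarrow> le i x y \<or> le i y x"
    and f_in_C: "i < n \<Longrightarrow> f i x \<in> C i"
    and f_sup: "i < n \<Longrightarrow> f i (sup x y) = (if le i (f i x) (f i y) then f i y else f i x)"
    and f_inj: "(\<And>i. i < n \<Longrightarrow> f i x = f i y) \<Longrightarrow> x = y"

lemma join_embeds_chains_imp_join_chain_embedding:
  assumes "join_embeds_chains TYPE('a::semilattice_sup) n"
  obtains C le and f :: "nat \<Rightarrow> 'a::semilattice_sup \<Rightarrow> 'a" where "join_chain_embedding n C le f"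
  using assms unfolding join_embeds_chains_def
proof (elim exE conjE)
  fix C le and f :: "nat \<Rightarrow> 'a \<Rightarrow> 'a"
  assume chains: "\<forall>i<n. (\<forall>x\<in>C i. le i x x) \<and> (\<forall>x\<in>C i. \<forall>y\<in>C i. le i x y \<and> le i y x \<longrightarrow> x = y)
      \<and> (\<forall>x\<in>C i. \<forall>y\<in>C i. \<forall>z\<in>C i. le i x y \<and> le i y z \<longrightarrow> le i x z)
      \<and> (\<forall>x\<in>C i. \<forall>y\<in>C i. le i x y \<or> le i y x)"
    and into: "\<forall>i<n. \<forall>x. f i x \<in> C i"
    and join: "\<forall>i<n. \<forall>x y. f i (sup x y) = (if le i (f i x) (f i y) then f i y else f i x)"
    and inj: "\<forall>x y. (\<forall>i<n. f i x = f i y) \<longrightarrow> x = y"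
  show thesis
  proof (rule that[of C le f], unfold_locales)
    fix i x y z assume i: "i < n"
    note chain = chains[rule_format, OF i]
    show "x \<in> C i \<Longrightarrow> le i x x"
      and "x \<in> C i \<Longrightarrow> y \<in> C i \<Longrightarrow> le i x y \<Longrightarrow> le i y x \<Longrightarrow> x = y"
      and "x \<in> C i \<Longrightarrow> y \<in> C i \<Longrightarrow> z \<in> C i \<Longrightarrow> le i x y \<Longrightarrow> le i y z \<Longrightarrow> le i x z"
      and "x \<in> C i \<Longrightarrow> y \<in> C i \<Longrightarrow> le i x y \<or> le i y x"
      using chain by blast+
    show "f i x \<in> C i" "f i (sup x y) = (if le i (f i x) (f i y) then f i y else f i x)"
      using into join i by simp_all
  next
    fix x y assume "\<And>i. i < n \<Longrightarrow> f i x = f i y"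
    then show "x = y" by (rule inj[rule_format])
  qed
qed

lemma join_dim_enat_imp_join_embeds_chains:
  "join_dim T = enat n \<Longrightarrow> join_embeds_chains T n"
  unfolding join_dim_def by (metis LeastI enat.inject infinity_ne_i0 enat_0 not_infinity_eq)

context join_chain_embedding
begin

abbreviation coord_le :: "nat \<Rightarrow> 'a \<Rightarrow> 'a \<Rightarrow> bool" where
  "coord_le i x y \<equiv> le i (f i x) (f i y)"

lemma coord_le_refl: "i < n \<Longrightarrow> coord_le i x x"
  by (simp add: chain_refl f_in_C)

lemma coord_le_trans: "i < n \<Longrightarrow> coord_le i x y \<Longrightarrow> coord_le i y z \<Longrightarrow> coord_le i x z"
  by (blast intro: chain_trans f_in_C)

lemma coord_le_total: "i < n \<Longrightarrow> \<not> coord_le i x y \<Longrightarrow> coord_le i y x"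
  using chain_total f_in_C by blast

lemma coord_le_antisym: "i < n \<Longrightarrow> coord_le i x y \<Longrightarrow> coord_le i y x \<Longrightarrow> f i x = f i y"
  by (simp add: chain_antisym f_in_C)

lemma coord_le_if_le: "i < n \<Longrightarrow> x \<le> y \<Longrightarrow> coord_le i x y"
  using f_sup[of i x y] coord_le_refl[of i x] by (auto simp: sup_absorb2 split: if_splits)

lemma le_if_coord_le: "(\<And>i. i < n \<Longrightarrow> coord_le i x y) \<Longrightarrow> x \<le> y"
  using f_inj[of "sup x y" y] f_sup by (simp add: le_iff_sup)

lemma coord_le_sup_left: "i < n \<Longrightarrow> coord_le i x z \<Longrightarrow> coord_le i y z \<Longrightarrow> coord_le i (sup x y) z"
  by (simp add: f_sup)

lemma coord_sup_absorb: "i < n \<Longrightarrow> coord_le i y x \<Longrightarrow> f i (sup x y) = f i x"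
  using coord_le_antisym by (auto simp: f_sup)

definition exceeds :: "nat \<Rightarrow> 'a set \<Rightarrow> 'a \<Rightarrow> bool" where
  "exceeds i I x \<longleftrightarrow> (\<forall>y\<in>I. \<not> coord_le i x y)"

definition sticks_out :: "nat \<Rightarrow> 'a set \<Rightarrow> 'a set \<Rightarrow> bool" where
  "sticks_out i I I' \<longleftrightarrow> (\<exists>x\<in>I'. exceeds i I x)"

lemma exceeds_mono: "i < n \<Longrightarrow> exceeds i I x \<Longrightarrow> x \<le> x' \<Longrightarrow> exceeds i I x'"
  unfolding exceeds_def using coord_le_trans coord_le_if_le by blast

lemma sticks_out_mono: "I0 \<subseteq> I \<Longrightarrow> I' \<subseteq> I0' \<Longrightarrow> sticks_out i I I' \<Longrightarrow> sticks_out i I0 I0'"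
  unfolding sticks_out_def exceeds_def by blast

lemma strict_subset_sticks_out:
  assumes I: "ideal_of I" and "I \<subset> I'"
  shows "\<exists>i<n. sticks_out i I I'"
proof (rule ccontr)
  assume "\<not> (\<exists>i<n. sticks_out i I I')"
  then have below: "\<exists>y\<in>I. coord_le i x y" if "i < n" "x \<in> I'" for i x
    using that unfolding sticks_out_def exceeds_def by auto
  obtain x where x: "x \<in> I'" "x \<notin> I" using \<open>I \<subset> I'\<close> by blast
  have "\<exists>y\<in>I. \<forall>i\<in>{..<n}. coord_le i x y"
  proof (rule ideal_of_common_witness[OF I])
    show "coord_le i x y'" if "i \<in> {..<n}" "coord_le i x y" "y \<le> y'" for i y y'
      using that coord_le_trans coord_le_if_le by (meson lessThan_iff)
  qed (use below x in auto)
  then obtain y where "y \<in> I" "\<And>i. i < n \<Longrightarrow> coord_le i x y" by auto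
  then show False using ideal_of_downward[OF I] le_if_coord_le x(2) by blast
qed

end

section \<open>Homogeneous chains of ideals\<close>

locale homogeneous_ideal_chain = join_chain_embedding n C le f
  for n C and le :: "nat \<Rightarrow> 'a::semilattice_sup \<Rightarrow> 'a \<Rightarrow> bool" and f +
  fixes J :: "rat \<Rightarrow> 'a set" and K :: "nat set"
  assumes ideal_J: "ideal_of (J q)"
    and J_mono: "q \<le> q' \<Longrightarrow> J q \<subseteq> J q'"
    and K_sub: "K \<subseteq> {..<n}" and K_ne: "K \<noteq> {}"
    and sticks_out_K: "i \<in> K \<Longrightarrow> q < q' \<Longrightarrow> sticks_out i (J q) (J q')"
    and not_sticks_out: "i < n \<Longrightarrow> i \<notin> K \<Longrightarrow> q < q' \<Longrightarrow> \<not> sticks_out i (J q) (J q')"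
begin

lemma K_less: "i \<in> K \<Longrightarrow> i < n"
  using K_sub by blast

lemma gap_hi_pos: "0 < gap_hi q"
  using gap_lo_pos gap_lo_less_gap_hi order.strict_trans by blast

lemma J_gap_hi_subset_gap_lo: "q < q' \<Longrightarrow> J (gap_hi q) \<subseteq> J (gap_lo q')"
  by (simp add: J_mono gap_hi_less_gap_lo less_imp_le)

lemma J_zero_subset_gap_lo: "J 0 \<subseteq> J (gap_lo q)"
  by (simp add: J_mono gap_lo_pos less_imp_le)

text \<open>For \<open>q < q'\<close> the witness of \<open>q\<close> lies in \<open>J (gap_lo q')\<close>, above which the witness of
  \<open>q'\<close> stands in every coordinate of \<open>K\<close>.\<close>

definition witness :: "rat \<Rightarrow> 'a" where
  "witness q = (SOME x. x \<in> J (gap_hi q) \<and> (\<forall>i\<in>K. exceeds i (J (gap_lo q)) x))"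

lemma witness_spec: "witness q \<in> J (gap_hi q) \<and> (\<forall>i\<in>K. exceeds i (J (gap_lo q)) (witness q))"
proof -
  have "\<exists>x\<in>J (gap_hi q). \<forall>i\<in>K. exceeds i (J (gap_lo q)) x"
  proof (rule ideal_of_common_witness[OF ideal_J])
    show "finite K" using K_sub finite_subset by blast
    show "exceeds i (J (gap_lo q)) y'" if "i \<in> K" "exceeds i (J (gap_lo q)) y" "y \<le> y'" for i y y'
      using that K_less exceeds_mono by blast
    show "\<exists>y\<in>J (gap_hi q). exceeds i (J (gap_lo q)) y" if "i \<in> K" for i
      using sticks_out_K[OF that gap_lo_less_gap_hi] unfolding sticks_out_def .
  qed
  then obtain x where "x \<in> J (gap_hi q) \<and> (\<forall>i\<in>K. exceeds i (J (gap_lo q)) x)" by blast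
  then show ?thesis unfolding witness_def by (rule someI)
qed

lemma witness_in_J: "witness q \<in> J (gap_hi q)"
  using witness_spec by blast

lemma witness_not_below: "i \<in> K \<Longrightarrow> x \<in> J (gap_lo q) \<Longrightarrow> \<not> coord_le i (witness q) x"
  using witness_spec unfolding exceeds_def by blast

lemma witness_coord_le: "i \<in> K \<Longrightarrow> q < q' \<Longrightarrow> coord_le i (witness q) (witness q')"
  using witness_not_below[of i "witness q" q'] witness_in_J J_gap_hi_subset_gap_lo coord_le_total K_less by blast

lemma witness_bounded_outside_K: "i < n \<Longrightarrow> i \<notin> K \<Longrightarrow> \<exists>y\<in>J 0. coord_le i (witness q) y"
  using not_sticks_out[OF _ _ gap_hi_pos, of i q] witness_in_J
  unfolding sticks_out_def exceeds_def by blast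

lemma sup_witness_mono:
  assumes z: "z \<in> J 0" and dominates: "\<And>y i. y \<in> J 0 \<Longrightarrow> i < n \<Longrightarrow> i \<notin> K \<Longrightarrow> coord_le i y z"
    and "q < q'"
  shows "sup z (witness q) \<le> sup z (witness q')"
proof (rule le_if_coord_le)
  fix i assume i: "i < n"
  have z_below: "coord_le i z (sup z (witness q'))" by (rule coord_le_if_le[OF i sup_ge1])
  have "coord_le i (witness q) (sup z (witness q'))"
  proof (cases "i \<in> K")
    case True
    have "coord_le i (witness q') (sup z (witness q'))" by (rule coord_le_if_le[OF i sup_ge2])
    with witness_coord_le[OF True \<open>q < q'\<close>] show ?thesis by (rule coord_le_trans[OF i])
  next
    case False
    obtain y where "y \<in> J 0" "coord_le i (witness q) y"
      using witness_bounded_outside_K[OF i False] by blast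
    then have "coord_le i (witness q) z"
      using coord_le_trans[OF i] dominates[OF _ i False] by blast
    then show ?thesis using z_below by (rule coord_le_trans[OF i])
  qed
  with z_below show "coord_le i (sup z (witness q)) (sup z (witness q'))"
    by (rule coord_le_sup_left[OF i])
qed

lemma sup_witness_neq:
  assumes "z \<in> J 0" "q < q'"
  shows "sup z (witness q) \<noteq> sup z (witness q')"
proof
  assume eq: "sup z (witness q) = sup z (witness q')"
  obtain i where i: "i \<in> K" using K_ne by blast
  have "sup z (witness q) \<in> J (gap_lo q')"
    using ideal_of_sup[OF ideal_J] assms J_zero_subset_gap_lo witness_in_J J_gap_hi_subset_gap_lo by blast
  then have "\<not> coord_le i (witness q') (sup z (witness q))" by (rule witness_not_below[OF i])
  moreover have "coord_le i (witness q') (sup z (witness q'))"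
    by (rule coord_le_if_le[OF K_less[OF i] sup_ge2])
  ultimately show False using eq by simp
qed

lemma not_scattered_if_dominated:
  assumes "z \<in> J 0" "\<And>y i. y \<in> J 0 \<Longrightarrow> i < n \<Longrightarrow> i \<notin> K \<Longrightarrow> coord_le i y z"
  shows "\<not> order_scattered_on (UNIV :: 'a set) (\<le>)"
proof -
  have "strict_mono (\<lambda>q. sup z (witness q))"
    by (rule strict_monoI, rule le_neq_trans) (use sup_witness_mono[OF assms] sup_witness_neq[OF assms(1)] in auto)
  then show ?thesis by (rule strict_mono_imp_not_order_scattered) simp
qed

end

subsection \<open>The undominated case: a copy of \<open>\<Omega>(\<eta>)\<close>\<close>

locale undominated_ideal_chain = homogeneous_ideal_chain +
  assumes undominated: "z \<in> J 0 \<Longrightarrow> \<exists>y\<in>J 0. \<exists>i<n. i \<notin> K \<and> \<not> coord_le i y z"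
begin

definition escape :: "'a \<Rightarrow> 'a" where
  "escape z = (SOME y. y \<in> J 0 \<and> (\<exists>i<n. i \<notin> K \<and> \<not> coord_le i y z))"

text \<open>Each level of \<open>\<Omega>(\<eta>)\<close> is finite, so one element of \<open>J 0\<close> dominates, outside \<open>K\<close>,
  the witnesses of all its points.\<close>

definition level_bound :: "nat \<Rightarrow> 'a" where
  "level_bound m = (SOME y. y \<in> J 0 \<and>
     (\<forall>p\<in>({..<n} - K) \<times> {r. (m, r) \<in> Omega_eta}. coord_le (fst p) (witness (snd p)) y))"

primrec spine :: "nat \<Rightarrow> 'a" where
  "spine 0 = level_bound 0"
| "spine (Suc m) = sup (sup (spine m) (escape (spine m))) (level_bound (Suc m))"

definition omega_map :: "nat \<times> rat \<Rightarrow> 'a" where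
  "omega_map p = sup (spine (fst p)) (witness (snd p))"

lemma escape_spec: "z \<in> J 0 \<Longrightarrow> escape z \<in> J 0 \<and> (\<exists>i<n. i \<notin> K \<and> \<not> coord_le i (escape z) z)"
  unfolding escape_def by (rule someI_ex) (use undominated in blast)

lemma level_bound_spec:
  "level_bound m \<in> J 0 \<and>
     (\<forall>p\<in>({..<n} - K) \<times> {r. (m, r) \<in> Omega_eta}. coord_le (fst p) (witness (snd p)) (level_bound m))"
proof -
  have "\<exists>y\<in>J 0. \<forall>p\<in>({..<n} - K) \<times> {r. (m, r) \<in> Omega_eta}. coord_le (fst p) (witness (snd p)) y"
  proof (rule ideal_of_common_witness[OF ideal_J])
    show "finite (({..<n} - K) \<times> {r. (m, r) \<in> Omega_eta})"
      using finite_Omega_eta_level by blast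
    show "coord_le (fst p) (witness (snd p)) y'"
      if "p \<in> ({..<n} - K) \<times> {r. (m, r) \<in> Omega_eta}" "coord_le (fst p) (witness (snd p)) y" "y \<le> y'"
      for p y y'
      using that coord_le_trans coord_le_if_le by (metis DiffD1 lessThan_iff mem_Times_iff)
    show "\<exists>y\<in>J 0. coord_le (fst p) (witness (snd p)) y"
      if "p \<in> ({..<n} - K) \<times> {r. (m, r) \<in> Omega_eta}" for p
      using that witness_bounded_outside_K[of "fst p" "snd p"] by auto
  qed
  then obtain y where "y \<in> J 0 \<and>
      (\<forall>p\<in>({..<n} - K) \<times> {r. (m, r) \<in> Omega_eta}. coord_le (fst p) (witness (snd p)) y)" by blast
  then show ?thesis unfolding level_bound_def by (rule someI)
qed

lemma spine_in_J: "spine m \<in> J 0"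
  by (induction m) (simp_all add: level_bound_spec escape_spec ideal_of_sup[OF ideal_J])

lemma spine_mono: "mono spine"
  by (simp add: mono_iff_le_Suc le_supI1)

lemma spine_separated: "m < m' \<Longrightarrow> \<exists>i<n. i \<notin> K \<and> f i (spine m) \<noteq> f i (spine m')"
proof -
  assume "m < m'"
  obtain i where i: "i < n" "i \<notin> K" "\<not> coord_le i (escape (spine m)) (spine m)"
    using escape_spec[OF spine_in_J] by blast
  have "escape (spine m) \<le> spine (Suc m)" by (simp add: le_supI1)
  also have "spine (Suc m) \<le> spine m'"
    using \<open>m < m'\<close> by (intro monoD[OF spine_mono]) simp
  finally have "coord_le i (escape (spine m)) (spine m')"
    by (rule coord_le_if_le[OF i(1)])
  then show ?thesis using i by auto
qed

lemma witness_below_spine: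
  assumes "(m, r) \<in> Omega_eta" "i < n" "i \<notin> K"
  shows "coord_le i (witness r) (spine m)"
proof -
  have "level_bound m \<le> spine m" by (cases m) (simp_all add: le_supI2)
  moreover have "coord_le i (witness r) (level_bound m)"
    using level_bound_spec[of m] assms by auto
  ultimately show ?thesis
    using coord_le_trans[OF assms(2)] coord_le_if_le[OF assms(2)] by blast
qed

lemma omega_map_coord_outside_K:
  "(m, r) \<in> Omega_eta \<Longrightarrow> i < n \<Longrightarrow> i \<notin> K \<Longrightarrow> f i (omega_map (m, r)) = f i (spine m)"
  unfolding omega_map_def by (simp add: coord_sup_absorb witness_below_spine)

lemma omega_map_in_J: "r < s \<Longrightarrow> omega_map (m, r) \<in> J (gap_lo s)"
  unfolding omega_map_def fst_conv snd_conv
  by (intro ideal_of_sup[OF ideal_J]) (use spine_in_J J_zero_subset_gap_lo witness_in_J J_gap_hi_subset_gap_lo in blast)+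

lemma omega_map_snd_separated: "r < s \<Longrightarrow> omega_map (m, r) \<noteq> omega_map (m', s)"
proof
  assume "r < s" and eq: "omega_map (m, r) = omega_map (m', s)"
  obtain i where i: "i \<in> K" using K_ne by blast
  have "\<not> coord_le i (witness s) (omega_map (m, r))"
    by (rule witness_not_below[OF i omega_map_in_J[OF \<open>r < s\<close>]])
  moreover have "coord_le i (witness s) (omega_map (m', s))"
    unfolding omega_map_def fst_conv snd_conv by (rule coord_le_if_le[OF K_less[OF i] sup_ge2])
  ultimately show False using eq by simp
qed

lemma inj_on_omega_map: "inj_on omega_map Omega_eta"
proof (rule inj_onI)
  fix p p' assume p: "p \<in> Omega_eta" and p': "p' \<in> Omega_eta" and eq: "omega_map p = omega_map p'"
  obtain m r m' s where pp: "p = (m, r)" "p' = (m', s)" by fastforce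
  have "r = s"
    using omega_map_snd_separated eq unfolding pp by (metis linorder_neqE)
  moreover have "m = m'"
  proof (rule ccontr)
    assume "m \<noteq> m'"
    then obtain i where "i < n" "i \<notin> K" "f i (spine m) \<noteq> f i (spine m')"
      using spine_separated by (metis linorder_neqE)
    then show False
      using eq omega_map_coord_outside_K p p' unfolding pp \<open>r = s\<close> by metis
  qed
  ultimately show "p = p'" using pp by simp
qed

lemma omega_map_mono:
  assumes a: "(m, r) \<in> Omega_eta" and "m \<le> m'" "r \<le> s"
  shows "omega_map (m, r) \<le> omega_map (m', s)"
proof -
  have "spine m \<le> spine m'" using \<open>m \<le> m'\<close> by (rule monoD[OF spine_mono])
  then have spine: "spine m \<le> omega_map (m', s)"
    unfolding omega_map_def fst_conv snd_conv by (rule le_supI1)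
  have "witness r \<le> omega_map (m', s)"
  proof (rule le_if_coord_le)
    fix i assume i: "i < n"
    show "coord_le i (witness r) (omega_map (m', s))"
    proof (cases "i \<in> K")
      case True
      have "coord_le i (witness r) (witness s)"
      proof (cases "r = s")
        case False
        with \<open>r \<le> s\<close> have "r < s" by simp
        then show ?thesis by (rule witness_coord_le[OF True])
      qed (simp add: coord_le_refl[OF i])
      moreover have "coord_le i (witness s) (omega_map (m', s))"
        unfolding omega_map_def fst_conv snd_conv by (rule coord_le_if_le[OF i sup_ge2])
      ultimately show ?thesis by (rule coord_le_trans[OF i])
    next
      case False
      have "coord_le i (spine m) (omega_map (m', s))" by (rule coord_le_if_le[OF i spine])
      with witness_below_spine[OF a i False] show ?thesis by (rule coord_le_trans[OF i])
    qed
  qed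
  with spine show ?thesis
    unfolding omega_map_def[of "(m, r)"] fst_conv snd_conv by (rule le_supI)
qed

lemma omega_map_pair_join:
  assumes "a \<in> Omega_eta" "b \<in> Omega_eta"
  shows "omega_map (pair_join a b) = sup (omega_map a) (omega_map b)"
proof (rule order.antisym)
  obtain m r m' s where ab: "a = (m, r)" "b = (m', s)" by fastforce
  have "spine (max m m') \<le> sup (spine m) (spine m')"
    and "witness (max r s) \<le> sup (witness r) (witness s)"
    by (simp_all add: max_def)
  moreover have "sup (omega_map a) (omega_map b) = sup (sup (spine m) (spine m')) (sup (witness r) (witness s))"
    unfolding ab omega_map_def by (simp add: sup_aci)
  ultimately show "omega_map (pair_join a b) \<le> sup (omega_map a) (omega_map b)"
    unfolding omega_map_def pair_join_def ab fst_conv snd_conv by (metis sup_mono)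
  show "sup (omega_map a) (omega_map b) \<le> omega_map (pair_join a b)"
    using assms omega_map_mono unfolding ab pair_join_def by simp
qed

lemma has_Omega_eta: "has_Omega_eta TYPE('a)"
  unfolding has_Omega_eta_def using inj_on_omega_map omega_map_pair_join by blast

end

lemma (in homogeneous_ideal_chain) not_scattered_or_has_Omega_eta:
  "\<not> order_scattered_on (UNIV :: 'a set) (\<le>) \<or> has_Omega_eta TYPE('a)"
proof (cases "\<exists>z\<in>J 0. \<forall>y\<in>J 0. \<forall>i<n. i \<notin> K \<longrightarrow> coord_le i y z")
  case True
  then show ?thesis using not_scattered_if_dominated by blast
next
  case False
  then interpret undominated_ideal_chain n C le f J K
    by unfold_locales blast
  show ?thesis using has_Omega_eta by blast
qed

lemma (in join_chain_embedding) homogeneous_ideal_subchain: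
  fixes F :: "rat \<Rightarrow> 'a set"
  assumes F: "strict_mono F" "range F \<subseteq> Ideals"
  obtains J K where "homogeneous_ideal_chain n C le f J K"
proof -
  have "\<exists>e K. strict_mono (e :: rat \<Rightarrow> rat) \<and> K \<subseteq> {..<n} \<and>
      (\<forall>i<n. \<forall>q q'. q < q' \<longrightarrow> (sticks_out i (F (e q)) (F (e q')) \<longleftrightarrow> i \<in> K))"
  proof (rule rat_homogeneous_subchain)
    fix i :: nat and a b a' b' :: rat
    assume "sticks_out i (F a') (F b')" "a \<le> a'" "b' \<le> b"
    then show "sticks_out i (F a) (F b)"
      using sticks_out_mono strict_mono_less_eq[OF F(1)] by blast
  qed
  then obtain e :: "rat \<Rightarrow> rat" and K where e: "strict_mono e" and K: "K \<subseteq> {..<n}"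
    and hom: "\<And>i q q'. i < n \<Longrightarrow> q < q' \<Longrightarrow> sticks_out i (F (e q)) (F (e q')) \<longleftrightarrow> i \<in> K"
    by auto
  define J where "J = F \<circ> e"
  have J: "strict_mono J" "\<And>q. ideal_of (J q)"
    using F strict_mono_o[OF F(1) e] by (auto simp: J_def Ideals_def)
  obtain i where "i < n" "sticks_out i (J 0) (J 1)"
    using strict_subset_sticks_out[OF J(2)] J(1) by (metis strict_mono_def zero_less_one)
  then have "K \<noteq> {}" using hom unfolding J_def by auto
  have "homogeneous_ideal_chain n C le f J K"
  proof unfold_locales
    show "J q \<subseteq> J q'" if "q \<le> q'" for q q'
      using that strict_mono_less_eq[OF J(1)] by blast
    show "sticks_out i (J q) (J q')" if "i \<in> K" "q < q'" for i q q'
      using hom that K unfolding J_def by auto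
    show "\<not> sticks_out i (J q) (J q')" if "i < n" "i \<notin> K" "q < q'" for i q q'
      using hom that unfolding J_def by auto
  qed (use J K \<open>K \<noteq> {}\<close> in auto)
  then show thesis by (rule that)
qed

lemma (in join_chain_embedding) Ideals_scattered_if_scattered_without_Omega_eta:
  assumes "order_scattered_on (UNIV :: 'a set) (\<le>)" "\<not> has_Omega_eta TYPE('a)"
  shows "order_scattered_on (Ideals :: 'a set set) (\<subseteq>)"
proof (rule ccontr)
  assume "\<not> order_scattered_on (Ideals :: 'a set set) (\<subseteq>)"
  then obtain F :: "rat \<Rightarrow> 'a set" where "strict_mono F" "range F \<subseteq> Ideals"
    by (rule not_order_scattered_imp_strict_mono)
  then obtain J K where "homogeneous_ideal_chain n C le f J K"
    by (rule homogeneous_ideal_subchain)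
  then interpret homogeneous_ideal_chain n C le f J K .
  show False using not_scattered_or_has_Omega_eta assms by blast
qed

theorem theorem9p7:
  fixes n :: nat
  assumes "join_dim TYPE('a::{semilattice_sup, order_bot}) = enat n"
  shows "order_scattered_on (Ideals :: 'a set set) (\<subseteq>) \<longleftrightarrow>
           (order_scattered_on (UNIV :: 'a set) (\<le>) \<and> \<not> has_Omega_eta TYPE('a))"
proof -
  obtain C le and f :: "nat \<Rightarrow> 'a \<Rightarrow> 'a" where "join_chain_embedding n C le f"
    using join_dim_enat_imp_join_embeds_chains[OF assms]
    by (rule join_embeds_chains_imp_join_chain_embedding)
  then interpret join_chain_embedding n C le f .
  show ?thesis
    using Ideals_scattered_imp_scattered has_Omega_eta_imp_Ideals_not_scattered
      Ideals_scattered_if_scattered_without_Omega_eta by blast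
qed

end
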